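(* Suppose each vertex $v_i$ of $P$ initially knows the value of $X[i,\ge j]$ for all $j>i$. Then there exists an $O(\zeta)$-round deterministic $\mathsf{CONGEST}$ algorithm that lets each vertex $v_i$ of $P$ compute $X[\le i,\ge i+1]$.
   Context: $G=(V,E)$ is an unweighted directed graph with $n=|V|$, also the communication network. $\mathsf{CONGEST}$: synchronous rounds, each vertex may send an $O(\log n)$-bit message to each neighbour per round, unique identifiers, unlimited local computation. $P=(s=v_0,\dots,v_{h_{st}}=t)$ is a given shortest $s$-$t$ path whose vertices know their indices, and $\zeta\ge1$ is a threshold. For $i<j$, $X[i,j]$ is the shortest length of an $s$-$t$ path consisting of the subpath of $P$ from $s$ to $v_i$, then a detour path from $v_i$ to $v_j$ with at most $\zeta$ edges sharing no edge with $P$, then the subpath of $P$ from $v_j$ to $t$ ($\infty$ if none exists). Further $X[i,\ge j]=\min_{j'\ge j}X[i,j']$ and $X[\le i,\ge j]=\min_{i'\le i}\min_{j'\ge j}X[i',j']$ (minimum over an empty set is $\infty$). *)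

theory Defs
  imports Main "HOL-Library.Extended_Nat"
begin

text \<open>Vertices are identified with their (unique) identifiers, natural numbers.\<close>

definition walk :: "(nat \<times> nat) set \<Rightarrow> nat list \<Rightarrow> bool" where
  "walk E d \<longleftrightarrow> d \<noteq> [] \<and> (\<forall>k. Suc k < length d \<longrightarrow> (d ! k, d ! Suc k) \<in> E)"

definition wedges :: "nat list \<Rightarrow> (nat \<times> nat) set" where
  "wedges d = {(d ! k, d ! Suc k) | k. Suc k < length d}"

definition congest_graph :: "nat set \<Rightarrow> (nat \<times> nat) set \<Rightarrow> nat \<Rightarrow> bool" where
  "congest_graph V E idexp \<longleftrightarrow> finite V \<and> E \<subseteq> V \<times> V \<and> V \<subseteq> {..< (card V + 1) ^ idexp}"

text \<open>P = ps = [v_0,...,v_h] is a shortest s-t path (s = v_0, t = v_h, h = length ps - 1).\<close>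
definition shortest_path :: "nat set \<Rightarrow> (nat \<times> nat) set \<Rightarrow> nat list \<Rightarrow> bool" where
  "shortest_path V E ps \<longleftrightarrow> walk E ps \<and> set ps \<subseteq> V \<and>
     (\<forall>d. walk E d \<and> hd d = hd ps \<and> last d = last ps \<longrightarrow> length ps \<le> length d)"

text \<open>X[i,j]: shortest length of s-v_i along P, then a detour walk v_i -> v_j with at most
  zeta edges sharing no edge with P, then v_j-t along P (infinity if none).\<close>
definition Xij :: "(nat \<times> nat) set \<Rightarrow> nat list \<Rightarrow> nat \<Rightarrow> nat \<Rightarrow> nat \<Rightarrow> enat" where
  "Xij E ps \<zeta> i j = (INF d \<in> {d. walk E d \<and> hd d = ps ! i \<and> last d = ps ! j \<and>
        length d - 1 \<le> \<zeta> \<and> wedges d \<inter> wedges ps = {}}.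
        enat (i + (length d - 1) + (length ps - 1 - j)))"

definition Xge :: "(nat \<times> nat) set \<Rightarrow> nat list \<Rightarrow> nat \<Rightarrow> nat \<Rightarrow> nat \<Rightarrow> enat" where
  "Xge E ps \<zeta> i j = (INF j' \<in> {j'. j \<le> j' \<and> j' < length ps}. Xij E ps \<zeta> i j')"

definition Xlege :: "(nat \<times> nat) set \<Rightarrow> nat list \<Rightarrow> nat \<Rightarrow> nat \<Rightarrow> nat \<Rightarrow> enat" where
  "Xlege E ps \<zeta> i j = (INF p \<in> {(i', j'). i' \<le> i \<and> j \<le> j' \<and> j' < length ps \<and> i' < j'}.
       Xij E ps \<zeta> (fst p) (snd p))"

text \<open>Local knowledge of a vertex at the start: its identifier, n, zeta, its out- and
  in-neighbours, its index on P (if on P) and the values X[i, >= j] for j > i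
  (given as a function of j; value infinity for j <= i, carrying no information).\<close>
record local_input =
  lid :: nat
  lnum :: nat
  lzeta :: nat
  lout :: "nat set"
  lin :: "nat set"
  lidx :: "nat option"
  lX :: "nat \<Rightarrow> enat"

definition nbrs :: "(nat \<times> nat) set \<Rightarrow> nat \<Rightarrow> nat set" where
  "nbrs E v = {u. (v, u) \<in> E \<or> (u, v) \<in> E}"

definition path_input :: "nat set \<Rightarrow> (nat \<times> nat) set \<Rightarrow> nat list \<Rightarrow> nat \<Rightarrow> nat \<Rightarrow> local_input" where
  "path_input V E ps \<zeta> v =
     (let idx = (if v \<in> set ps then Some (THE i. i < length ps \<and> ps ! i = v) else None) in
      \<lparr> lid = v, lnum = card V, lzeta = \<zeta>, lout = {u. (v, u) \<in> E}, lin = {u. (u, v) \<in> E},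
        lidx = idx,
        lX = (\<lambda>j. case idx of Some i \<Rightarrow> (if i < j then Xge E ps \<zeta> i j else \<infinity>) | None \<Rightarrow> \<infinity>) \<rparr>)"

text \<open>A deterministic algorithm is given in full-information form: the message a vertex sends
  to neighbour u in a round is a function of its local input and the history of all messages
  it received so far (an inbox maps a sender identifier to the message received from it, if
  any); its output is likewise a function of input and history.  Messages are natural numbers
  (bounded below by a polynomial in n, i.e. O(log n) bits, in the theorem).\<close>

type_synonym inbox = "nat \<Rightarrow> nat option"
type_synonym send_fun = "local_input \<Rightarrow> inbox list \<Rightarrow> nat \<Rightarrow> nat option"

fun hist :: "send_fun \<Rightarrow> (nat \<times> nat) set \<Rightarrow> (nat \<Rightarrow> local_input) \<Rightarrow> nat \<Rightarrow> nat \<Rightarrow> inbox list" where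
  "hist sf E inp 0 v = []"
| "hist sf E inp (Suc r) v =
     hist sf E inp r v @ [(\<lambda>u. if u \<in> nbrs E v then sf (inp u) (hist sf E inp r u) v else None)]"

end

theory Submission
  imports Defs
begin

text \<open>In round r the vertex v_m of P combines its own input X[m, \<ge> m + \<zeta> - r] with the value
  its predecessor v_(m-1) held one round earlier. By induction, after r rounds v_m holds
  min_(m - r \<le> i' \<le> m) X[i', \<ge> m + \<zeta> - r], so after \<zeta> - 1 rounds it holds the minimum of
  X[i', \<ge> m + 1] over the window m - \<zeta> + 1 \<le> i' \<le> m. Because P is a shortest path, a detour
  with at most \<zeta> edges cannot jump more than \<zeta> positions ahead along P, so start indices left
  of the window contribute nothing and the window minimum is X[\<le> m, \<ge> m + 1].
  Every finite value of X is at most 3n (detours can be shortened to simple paths), so a message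
  carrying the sender's index on P and one such value is below (n + 1)^3.\<close>

lemma walk_Nil [simp]: "\<not> walk E []"
  by (simp add: walk_def)

lemma wedges_eq_set_zip: "wedges d = set (zip d (tl d))"
  by (auto simp: wedges_def set_zip nth_tl)

lemma wedges_single [simp]: "wedges [x] = {}"
  and wedges_Cons2 [simp]: "wedges (x # y # zs) = insert (x, y) (wedges (y # zs))"
  by (simp_all add: wedges_eq_set_zip)

lemma wedges_append: "wedges (xs @ y # ys) = wedges (xs @ [y]) \<union> wedges (y # ys)"
proof (induction xs)
  case (Cons a xs)
  then show ?case by (cases xs) auto
qed simp

lemma walk_iff_wedges: "walk E d \<longleftrightarrow> d \<noteq> [] \<and> wedges d \<subseteq> E"
  unfolding walk_def wedges_def by blast

lemma walk_append: "walk E (xs @ y # ys) \<longleftrightarrow> walk E (xs @ [y]) \<and> walk E (y # ys)"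
  unfolding walk_iff_wedges wedges_append[of xs y ys] by simp

lemma walk_take_Suc: "walk E d \<Longrightarrow> i < length d \<Longrightarrow> walk E (take (Suc i) d)"
  by (auto simp: walk_def)

lemma walk_drop: "walk E d \<Longrightarrow> j < length d \<Longrightarrow> walk E (drop j d)"
  by (auto simp: walk_def)

lemma walk_append_tl:
  assumes "walk E xs" "walk E ys" "last xs = hd ys"
  shows "walk E (xs @ tl ys)"
proof -
  have xs: "xs = butlast xs @ [hd ys]"
    using assms(1,3) by (metis append_butlast_last_id walk_Nil)
  have ys: "ys = hd ys # tl ys"
    using assms(2) by (metis list.collapse walk_Nil)
  have "walk E (butlast xs @ hd ys # tl ys)"
    using assms(1,2) xs ys walk_append by metis
  moreover have "xs @ tl ys = butlast xs @ hd ys # tl ys"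
    by (subst xs) simp
  ultimately show ?thesis
    by (simp only:)
qed

lemma last_append_tl:
  "xs \<noteq> [] \<Longrightarrow> ys \<noteq> [] \<Longrightarrow> last xs = hd ys \<Longrightarrow> last (xs @ tl ys) = last ys"
  by (cases ys) auto

lemma walk_remove_cycle:
  assumes "walk E d" "\<not> distinct d"
  obtains d' where "walk E d'" "hd d' = hd d" "last d' = last d" "wedges d' \<subseteq> wedges d"
    "length d' < length d"
proof -
  obtain a x b c where d: "d = a @ [x] @ b @ [x] @ c"
    using not_distinct_decomp[OF assms(2)] by blast
  have "walk E (a @ [x])" "walk E (x # c)"
    using assms(1) walk_append[of E a x "b @ x # c"] walk_append[of E "x # b" x c] by (auto simp: d)
  then have "walk E (a @ x # c)"
    using walk_append by blast
  moreover have "wedges (a @ x # c) \<subseteq> wedges d"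
    using wedges_append[of a x c] wedges_append[of a x "b @ x # c"] wedges_append[of "x # b" x c]
    by (auto simp: d)
  moreover have "hd (a @ x # c) = hd d" "last (a @ x # c) = last d"
    by (simp_all add: d hd_append last_append)
  ultimately show thesis
    using that by (simp add: d)
qed

lemma walk_shorten_to_distinct:
  assumes "walk E d"
  obtains d' where "walk E d'" "hd d' = hd d" "last d' = last d" "wedges d' \<subseteq> wedges d"
    "length d' \<le> length d" "distinct d'"
  using assms
proof (induction "length d" arbitrary: d thesis rule: less_induct)
  case less
  show ?case
  proof (cases "distinct d")
    case True
    then show ?thesis
      using less.prems by blast
  next
    case False
    then obtain d1 where d1: "walk E d1" "hd d1 = hd d" "last d1 = last d"
      "wedges d1 \<subseteq> wedges d" "length d1 < length d"
      using walk_remove_cycle less.prems(2) by blast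
    obtain d2 where "walk E d2" "hd d2 = hd d1" "last d2 = last d1" "wedges d2 \<subseteq> wedges d1"
      "length d2 \<le> length d1" "distinct d2"
      using less.hyps[OF d1(5) _ d1(1)] by blast
    with d1 show ?thesis
      using less.prems(1) by simp
  qed
qed

lemma walk_set_subset:
  assumes "walk E d" "E \<subseteq> V \<times> V" "hd d \<in> V"
  shows "set d \<subseteq> V"
proof
  fix x
  assume "x \<in> set d"
  then obtain k where k: "k < length d" "d ! k = x"
    by (auto simp: in_set_conv_nth)
  show "x \<in> V"
  proof (cases k)
    case 0
    then show ?thesis
      using k assms(3) by (simp add: hd_conv_nth)
  next
    case (Suc k')
    then have "(d ! k', x) \<in> E"
      using assms(1) k unfolding walk_def by auto
    then show ?thesis
      using assms(2) by auto
  qed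
qed

lemma shortest_path_distinct:
  assumes "shortest_path V E ps"
  shows "distinct ps"
proof (rule ccontr)
  assume "\<not> distinct ps"
  then obtain d where "walk E d" "hd d = hd ps" "last d = last ps" "length d < length ps"
    using walk_remove_cycle assms unfolding shortest_path_def by metis
  then show False
    using assms unfolding shortest_path_def by force
qed

lemma shortest_path_length_le_card:
  assumes "congest_graph V E idexp" "shortest_path V E ps"
  shows "length ps \<le> card V"
  using assms shortest_path_distinct[OF assms(2)] distinct_card[of ps] card_mono[of V "set ps"]
  by (auto simp: congest_graph_def shortest_path_def)

text \<open>Splicing the detour into P gives an s-t walk, which is not shorter than P.\<close>
lemma shortest_path_detour_reach:
  assumes sp: "shortest_path V E ps" and ij: "i < length ps" "j < length ps"
    and d: "walk E d" "hd d = ps ! i" "last d = ps ! j"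
  shows "j \<le> i + (length d - 1)"
proof -
  have P: "walk E ps"
    using sp by (simp add: shortest_path_def)
  have d_ne: "d \<noteq> []"
    using d(1) by auto
  define w where "w = (take (Suc i) ps @ tl d) @ tl (drop j ps)"
  have last_take: "last (take (Suc i) ps) = ps ! i"
    using ij(1) by (simp add: take_Suc_conv_app_nth)
  have front_walk: "walk E (take (Suc i) ps @ tl d)"
    using walk_take_Suc[OF P ij(1)] d by (intro walk_append_tl) (simp_all add: last_take)
  moreover have front_last: "last (take (Suc i) ps @ tl d) = ps ! j"
    using d d_ne ij(1) by (subst last_append_tl) (auto simp: last_take)
  ultimately have "walk E w"
    unfolding w_def by (metis walk_append_tl walk_drop[OF P ij(2)] hd_drop_conv_nth ij(2))
  moreover have "hd w = hd ps"
    using ij(1) by (cases ps) (simp_all add: w_def)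
  moreover have "last w = last ps"
    unfolding w_def using front_last ij(2) by (subst last_append_tl) (auto simp: hd_drop_conv_nth)
  ultimately have "length ps \<le> length w"
    using sp unfolding shortest_path_def by blast
  moreover have "length w = Suc i + (length d - 1) + (length ps - Suc j)"
    using ij by (simp add: w_def)
  ultimately show ?thesis
    using ij(2) by linarith
qed

lemma Xij_eq_infinity_if_far:
  assumes "shortest_path V E ps" "i < length ps" "j < length ps" "i + \<zeta> < j"
  shows "Xij E ps \<zeta> i j = \<infinity>"
proof -
  have no_detour: "{d. walk E d \<and> hd d = ps ! i \<and> last d = ps ! j \<and> length d - 1 \<le> \<zeta>
          \<and> wedges d \<inter> wedges ps = {}} = {}"
    using shortest_path_detour_reach[OF assms(1-3)] assms(4) by fastforce
  show ?thesis
    unfolding Xij_def no_detour by (simp add: top_enat_def)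
qed

lemma Xij_le_if_finite:
  assumes cg: "congest_graph V E idexp" and sp: "shortest_path V E ps"
    and i: "i < length ps" and fin: "Xij E ps \<zeta> i j \<noteq> \<infinity>"
  shows "Xij E ps \<zeta> i j \<le> enat (3 * card V)"
proof -
  let ?S = "{d. walk E d \<and> hd d = ps ! i \<and> last d = ps ! j \<and> length d - 1 \<le> \<zeta>
               \<and> wedges d \<inter> wedges ps = {}}"
  have "?S \<noteq> {}"
  proof
    assume "?S = {}"
    then have "Xij E ps \<zeta> i j = \<infinity>"
      unfolding Xij_def by (simp only: INF_empty top_enat_def)
    then show False
      using fin by contradiction
  qed
  then obtain d where d: "d \<in> ?S"
    by blast
  then obtain d' where d': "walk E d'" "hd d' = hd d" "last d' = last d" "wedges d' \<subseteq> wedges d"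
    "length d' \<le> length d" "distinct d'"
    using walk_shorten_to_distinct[of E d] by blast
  have "d' \<in> ?S"
    using d d' by auto
  then have "Xij E ps \<zeta> i j \<le> enat (i + (length d' - 1) + (length ps - 1 - j))"
    unfolding Xij_def by (rule INF_lower)
  moreover have "ps ! i \<in> V"
    using sp i nth_mem by (auto simp: shortest_path_def)
  then have "set d' \<subseteq> V"
    using walk_set_subset[OF d'(1)] cg d d' by (auto simp: congest_graph_def)
  then have "length d' \<le> card V"
    using cg d'(6) distinct_card[of d'] card_mono[of V "set d'"] by (auto simp: congest_graph_def)
  moreover have "length ps \<le> card V"
    using shortest_path_length_le_card[OF cg sp] .
  ultimately show ?thesis
    using i by (auto elim!: order.trans)
qed

lemma INF_enat_le_if_finite:
  fixes f :: "'a \<Rightarrow> enat"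
  assumes "\<And>x. x \<in> A \<Longrightarrow> f x \<noteq> \<infinity> \<Longrightarrow> f x \<le> K" and "(INF x\<in>A. f x) \<noteq> \<infinity>"
  shows "(INF x\<in>A. f x) \<le> K"
proof -
  obtain x where "x \<in> A" "f x \<noteq> \<infinity>"
    using assms(2) by (metis INF_top_conv(2) top_enat_def)
  then show ?thesis
    using assms(1) by (meson INF_lower order.trans)
qed

lemma Xge_le_if_finite:
  assumes "congest_graph V E idexp" "shortest_path V E ps" "i < length ps" "Xge E ps \<zeta> i j \<noteq> \<infinity>"
  shows "Xge E ps \<zeta> i j \<le> enat (3 * card V)"
  using assms unfolding Xge_def by (intro INF_enat_le_if_finite Xij_le_if_finite)

lemma Xlege_Suc_eq_INF_window:
  assumes sp: "shortest_path V E ps" and i: "i < length ps" and z: "1 \<le> \<zeta>"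
  shows "Xlege E ps \<zeta> i (Suc i) = (INF i' \<in> {i - (\<zeta> - 1)..i}. Xge E ps \<zeta> i' (Suc i))"
proof (rule order.antisym)
  show "Xlege E ps \<zeta> i (Suc i) \<le> (INF i' \<in> {i - (\<zeta> - 1)..i}. Xge E ps \<zeta> i' (Suc i))"
    unfolding Xge_def Xlege_def by (intro INF_greatest INF_lower2) auto
next
  have "(INF i' \<in> {i - (\<zeta> - 1)..i}. Xge E ps \<zeta> i' (Suc i)) \<le> Xij E ps \<zeta> i' j'"
    if ij': "i' \<le> i" "Suc i \<le> j'" "j' < length ps" for i' j'
  proof (cases "i - (\<zeta> - 1) \<le> i'")
    case True
    then have "(INF i' \<in> {i - (\<zeta> - 1)..i}. Xge E ps \<zeta> i' (Suc i)) \<le> Xge E ps \<zeta> i' (Suc i)"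
      using ij' by (intro INF_lower) auto
    also have "\<dots> \<le> Xij E ps \<zeta> i' j'"
      unfolding Xge_def using ij' by (intro INF_lower) auto
    finally show ?thesis .
  next
    case False
    then have "Xij E ps \<zeta> i' j' = \<infinity>"
      using ij' z by (intro Xij_eq_infinity_if_far[OF sp]) auto
    then show ?thesis
      by simp
  qed
  then show "(INF i' \<in> {i - (\<zeta> - 1)..i}. Xge E ps \<zeta> i' (Suc i)) \<le> Xlege E ps \<zeta> i (Suc i)"
    unfolding Xlege_def by (intro INF_greatest) auto
qed

text \<open>Finite values of X are at most 3n (Xge_le_if_finite), so encode_enat maps every value
  that occurs below this base.\<close>
definition msg_base :: "nat \<Rightarrow> nat" where
  "msg_base n = 3 * n + 2"

definition encode_enat :: "enat \<Rightarrow> nat" where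
  "encode_enat x = (case x of enat k \<Rightarrow> Suc k | \<infinity> \<Rightarrow> 0)"

definition decode_enat :: "nat \<Rightarrow> enat" where
  "decode_enat c = (if c = 0 then \<infinity> else enat (c - 1))"

definition tag_msg :: "nat \<Rightarrow> nat \<Rightarrow> enat \<Rightarrow> nat" where
  "tag_msg n m x = m * msg_base n + encode_enat x"

definition msg_tag :: "nat \<Rightarrow> nat \<Rightarrow> nat" where
  "msg_tag n msg = msg div msg_base n"

definition msg_value :: "nat \<Rightarrow> nat \<Rightarrow> enat" where
  "msg_value n msg = decode_enat (msg mod msg_base n)"

lemma decode_encode_enat [simp]: "decode_enat (encode_enat x) = x"
  by (cases x) (simp_all add: encode_enat_def decode_enat_def)

lemma encode_enat_less_msg_base:
  "(x \<noteq> \<infinity> \<Longrightarrow> x \<le> enat (3 * n)) \<Longrightarrow> encode_enat x < msg_base n"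
  by (cases x) (auto simp: encode_enat_def msg_base_def)

lemma encode_decode_enat [simp]: "encode_enat (decode_enat c) = c"
  by (simp add: encode_enat_def decode_enat_def)

lemma encode_enat_infinity_less_msg_base [simp]: "encode_enat \<infinity> < msg_base n"
  by (simp add: encode_enat_def msg_base_def)

lemma encode_enat_min_less: "encode_enat x < b \<Longrightarrow> encode_enat y < b \<Longrightarrow> encode_enat (min x y) < b"
  by (simp add: min_def)

lemma encode_msg_value_less_msg_base: "encode_enat (msg_value n msg) < msg_base n"
  by (simp add: msg_value_def msg_base_def)

lemma msg_tag_value_tag_msg:
  assumes "encode_enat x < msg_base n"
  shows "msg_tag n (tag_msg n m x) = m" "msg_value n (tag_msg n m x) = x"
  using assms by (simp_all add: tag_msg_def msg_tag_def msg_value_def)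

text \<open>A vertex of P does not know the identifier of its predecessor on P, so messages are tagged
  with the sender's index on P and v_m reads the message tagged m - 1. The test 0 < m keeps v_0
  from reading a message tagged with the truncated 0 - 1 = 0.\<close>
definition pred_value :: "local_input \<Rightarrow> inbox \<Rightarrow> enat" where
  "pred_value inp I = (case lidx inp of
     Some m \<Rightarrow>
       if 0 < m \<and> (\<exists>u msg. I u = Some msg \<and> msg_tag (lnum inp) msg = m - 1)
       then msg_value (lnum inp) (SOME msg. \<exists>u. I u = Some msg \<and> msg_tag (lnum inp) msg = m - 1)
       else \<infinity>
   | None \<Rightarrow> \<infinity>)"

definition held_value :: "local_input \<Rightarrow> inbox list \<Rightarrow> enat" where
  "held_value inp H = (case lidx inp of
     Some m \<Rightarrow> min (lX inp (m + (lzeta inp - length H))) (if H = [] then \<infinity> else pred_value inp (last H))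
   | None \<Rightarrow> \<infinity>)"

definition window_send :: send_fun where
  "window_send inp H u = map_option (\<lambda>m. tag_msg (lnum inp) m (held_value inp H)) (lidx inp)"

definition window_out :: "local_input \<Rightarrow> inbox list \<Rightarrow> enat" where
  "window_out inp H = held_value inp (butlast H)"

lemma path_input_lnum [simp]: "lnum (path_input V E ps \<zeta> v) = card V"
  by (simp add: path_input_def Let_def)

lemma path_input_nth:
  assumes "distinct ps" "m < length ps"
  shows "lidx (path_input V E ps \<zeta> (ps ! m)) = Some m"
    and "lzeta (path_input V E ps \<zeta> (ps ! m)) = \<zeta>"
    and "lX (path_input V E ps \<zeta> (ps ! m)) = (\<lambda>j. if m < j then Xge E ps \<zeta> m j else \<infinity>)"
proof -
  have "(THE i. i < length ps \<and> ps ! i = ps ! m) = m"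
    using assms by (auto intro!: the_equality simp: nth_eq_iff_index_eq)
  then show "lidx (path_input V E ps \<zeta> (ps ! m)) = Some m"
    and "lzeta (path_input V E ps \<zeta> (ps ! m)) = \<zeta>"
    and "lX (path_input V E ps \<zeta> (ps ! m)) = (\<lambda>j. if m < j then Xge E ps \<zeta> m j else \<infinity>)"
    using assms(2) by (simp_all add: path_input_def Let_def)
qed

lemma path_input_lidx_SomeD:
  assumes "distinct ps" "lidx (path_input V E ps \<zeta> v) = Some m"
  shows "m < length ps" "v = ps ! m"
proof -
  have "v \<in> set ps"
    using assms(2) by (auto simp: path_input_def Let_def split: if_splits)
  then obtain k where k: "k < length ps" "v = ps ! k"
    by (auto simp: in_set_conv_nth)
  then show "m < length ps" "v = ps ! m"
    using assms path_input_nth(1)[OF assms(1) k(1)] by simp_all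
qed

lemma encode_pred_value_less_msg_base: "encode_enat (pred_value inp I) < msg_base (lnum inp)"
  unfolding pred_value_def by (simp add: encode_msg_value_less_msg_base split: option.split)

lemma encode_held_value_less_msg_base:
  assumes cg: "congest_graph V E idexp" and sp: "shortest_path V E ps"
  shows "encode_enat (held_value (path_input V E ps \<zeta> v) H) < msg_base (card V)"
proof (cases "lidx (path_input V E ps \<zeta> v)")
  case (Some m)
  let ?inp = "path_input V E ps \<zeta> v"
  have m: "m < length ps" "v = ps ! m"
    using path_input_lidx_SomeD[OF shortest_path_distinct[OF sp] Some] by auto
  have "lX ?inp = (\<lambda>j. if m < j then Xge E ps \<zeta> m j else \<infinity>)"
    using path_input_nth(3)[OF shortest_path_distinct[OF sp] m(1)] m(2) by simp
  then have "encode_enat (lX ?inp j) < msg_base (card V)" for j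
    by (auto intro!: encode_enat_less_msg_base Xge_le_if_finite[OF cg sp m(1)])
  then show ?thesis
    using encode_pred_value_less_msg_base[of ?inp]
    by (simp add: held_value_def Some encode_enat_min_less)
qed (simp add: held_value_def)

lemma window_send_SomeD:
  assumes "distinct ps" "window_send (path_input V E ps \<zeta> v) H u = Some msg"
  obtains m where "m < length ps" "v = ps ! m"
    "msg = tag_msg (card V) m (held_value (path_input V E ps \<zeta> v) H)"
proof -
  obtain m where m: "lidx (path_input V E ps \<zeta> v) = Some m"
    "msg = tag_msg (card V) m (held_value (path_input V E ps \<zeta> v) H)"
    using assms(2) by (auto simp: window_send_def)
  then show thesis
    using that path_input_lidx_SomeD[OF assms(1) m(1)] by blast
qed

lemma window_send_less:
  assumes cg: "congest_graph V E idexp" and sp: "shortest_path V E ps"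
    and send: "window_send (path_input V E ps \<zeta> v) H u = Some msg"
  shows "msg < (card V + 1) ^ 3"
proof -
  obtain m where m: "m < length ps" "msg = tag_msg (card V) m (held_value (path_input V E ps \<zeta> v) H)"
    using window_send_SomeD[OF shortest_path_distinct[OF sp] send] by blast
  have "msg < Suc m * msg_base (card V)"
    using m(2) encode_held_value_less_msg_base[OF cg sp] by (simp add: tag_msg_def)
  also have "\<dots> \<le> card V * msg_base (card V)"
    using m(1) shortest_path_length_le_card[OF cg sp] by (intro mult_right_mono) auto
  also have "\<dots> \<le> (card V + 1) ^ 3"
    by (simp add: msg_base_def power3_eq_cube algebra_simps)
  finally show ?thesis .
qed

lemma hist_length [simp]: "length (hist sf E inp r v) = r"
  by (induction r) auto

lemma pred_value_hist_Suc:
  assumes cg: "congest_graph V E idexp" and sp: "shortest_path V E ps"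
    and k: "Suc k < length ps"
  shows "pred_value (path_input V E ps \<zeta> (ps ! Suc k))
           (last (hist window_send E (path_input V E ps \<zeta>) (Suc r) (ps ! Suc k)))
       = held_value (path_input V E ps \<zeta> (ps ! k))
           (hist window_send E (path_input V E ps \<zeta>) r (ps ! k))"
    (is "_ = ?c")
proof -
  let ?inp = "path_input V E ps \<zeta>"
  let ?H = "hist window_send E ?inp"
  let ?n = "card V"
  define I where "I = last (?H (Suc r) (ps ! Suc k))"
  have ds: "distinct ps"
    using shortest_path_distinct[OF sp] .
  have I: "I u = (if u \<in> nbrs E (ps ! Suc k) then window_send (?inp u) (?H r u) (ps ! Suc k) else None)" for u
    by (simp add: I_def)
  have enc: "encode_enat ?c < msg_base ?n"
    using encode_held_value_less_msg_base[OF cg sp] .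
  have "(ps ! k, ps ! Suc k) \<in> E"
    using sp k unfolding shortest_path_def walk_def by blast
  then have "ps ! k \<in> nbrs E (ps ! Suc k)"
    by (simp add: nbrs_def)
  then have pred_msg: "I (ps ! k) = Some (tag_msg ?n k ?c)"
    using path_input_nth(1)[OF ds, of k] k by (simp add: I window_send_def)
  have unique: "msg = tag_msg ?n k ?c" if "I u = Some msg" "msg_tag ?n msg = k" for u msg
  proof -
    have "window_send (?inp u) (?H r u) (ps ! Suc k) = Some msg"
      using that(1) by (simp add: I split: if_splits)
    then obtain j where j: "j < length ps" "u = ps ! j"
      "msg = tag_msg ?n j (held_value (?inp u) (?H r u))"
      by (rule window_send_SomeD[OF ds])
    then have "msg_tag ?n msg = j"
      using msg_tag_value_tag_msg(1) encode_held_value_less_msg_base[OF cg sp] by simp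
    then show ?thesis
      using j that(2) by simp
  qed
  have "\<exists>u msg. I u = Some msg \<and> msg_tag ?n msg = k"
    using pred_msg msg_tag_value_tag_msg(1)[OF enc] by blast
  then have "pred_value (?inp (ps ! Suc k)) I
      = msg_value ?n (SOME msg. \<exists>u. I u = Some msg \<and> msg_tag ?n msg = k)"
    using path_input_nth(1)[OF ds k] unfolding pred_value_def by simp
  also have "(SOME msg. \<exists>u. I u = Some msg \<and> msg_tag ?n msg = k) = tag_msg ?n k ?c"
    using pred_msg unique msg_tag_value_tag_msg(1)[OF enc] by (intro some_equality) blast+
  also have "msg_value ?n (tag_msg ?n k ?c) = ?c"
    using msg_tag_value_tag_msg(2)[OF enc] .
  finally show ?thesis
    unfolding I_def .
qed

lemma held_value_hist:
  assumes cg: "congest_graph V E idexp" and sp: "shortest_path V E ps"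
  shows "r < \<zeta> \<Longrightarrow> m < length ps \<Longrightarrow>
    held_value (path_input V E ps \<zeta> (ps ! m)) (hist window_send E (path_input V E ps \<zeta>) r (ps ! m))
      = (INF i' \<in> {m - r..m}. Xge E ps \<zeta> i' (m + (\<zeta> - r)))"
proof (induction r arbitrary: m)
  case 0
  then show ?case
    using path_input_nth[OF shortest_path_distinct[OF sp] 0(2)] by (simp add: held_value_def)
next
  case (Suc r)
  let ?inp = "path_input V E ps \<zeta>"
  let ?H = "hist window_send E ?inp"
  note input = path_input_nth[OF shortest_path_distinct[OF sp] Suc.prems(2)]
  have "?H (Suc r) (ps ! m) \<noteq> []"
    by simp
  have "m < m + (\<zeta> - Suc r)"
    using Suc.prems(1) by simp
  then have "lX (?inp (ps ! m)) (m + (\<zeta> - Suc r)) = Xge E ps \<zeta> m (m + (\<zeta> - Suc r))"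
    by (simp only: input(3) if_True)
  then have "held_value (?inp (ps ! m)) (?H (Suc r) (ps ! m))
      = min (Xge E ps \<zeta> m (m + (\<zeta> - Suc r))) (pred_value (?inp (ps ! m)) (last (?H (Suc r) (ps ! m))))"
    using input(1,2) \<open>?H (Suc r) (ps ! m) \<noteq> []\<close> by (simp add: held_value_def del: hist.simps)
  also have "\<dots> = (INF i' \<in> {m - Suc r..m}. Xge E ps \<zeta> i' (m + (\<zeta> - Suc r)))"
  proof (cases m)
    case 0
    then show ?thesis
      using path_input_nth(1)[OF shortest_path_distinct[OF sp] Suc.prems(2)]
      by (simp add: pred_value_def del: hist.simps)
  next
    case (Suc m')
    then have "pred_value (?inp (ps ! m)) (last (?H (Suc r) (ps ! m)))
        = (INF i' \<in> {m' - r..m'}. Xge E ps \<zeta> i' (m' + (\<zeta> - r)))"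
      using pred_value_hist_Suc[OF cg sp, of m' \<zeta> r] Suc.IH[of m'] Suc.prems by simp
    moreover have "m' + (\<zeta> - r) = m + (\<zeta> - Suc r)" "{m - Suc r..m} = insert m {m' - r..m'}"
      using Suc Suc.prems(1) by auto
    ultimately show ?thesis
      by (simp add: inf_min)
  qed
  finally show ?case .
qed

lemma window_out_correct:
  assumes cg: "congest_graph V E idexp" and sp: "shortest_path V E ps"
    and i: "i < length ps" and z: "1 \<le> \<zeta>"
  shows "window_out (path_input V E ps \<zeta> (ps ! i)) (hist window_send E (path_input V E ps \<zeta>) \<zeta> (ps ! i))
       = Xlege E ps \<zeta> i (Suc i)"
proof -
  have "butlast (hist window_send E (path_input V E ps \<zeta>) \<zeta> (ps ! i))
      = hist window_send E (path_input V E ps \<zeta>) (\<zeta> - 1) (ps ! i)"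
    using z by (cases \<zeta>) simp_all
  then show ?thesis
    using held_value_hist[OF cg sp, where r = "\<zeta> - 1" and m = i] Xlege_Suc_eq_INF_window[OF sp i z] i z
    by (simp add: window_out_def)
qed

theorem lemma4p4:
  shows "\<forall>idexp :: nat. \<exists>(sendf :: send_fun) (outf :: local_input \<Rightarrow> inbox list \<Rightarrow> enat)
            (cr :: nat) (cm :: nat).
     \<forall>V E ps (\<zeta> :: nat).
       congest_graph V E idexp \<and> shortest_path V E ps \<and> 1 \<le> \<zeta> \<longrightarrow>
       (\<forall>r < cr * \<zeta>. \<forall>v \<in> V. \<forall>u \<in> nbrs E v. \<forall>m.
          sendf (path_input V E ps \<zeta> v) (hist sendf E (path_input V E ps \<zeta>) r v) u = Some m
          \<longrightarrow> m < (card V + 1) ^ cm) \<and>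
       (\<forall>i < length ps.
          outf (path_input V E ps \<zeta> (ps ! i)) (hist sendf E (path_input V E ps \<zeta>) (cr * \<zeta>) (ps ! i))
          = Xlege E ps \<zeta> i (Suc i))"
proof (rule allI, rule exI[of _ window_send], rule exI[of _ window_out], rule exI[of _ 1],
    rule exI[of _ 3], intro allI impI conjI ballI; elim conjE)
  show "msg < (card V + 1) ^ 3"
    if "congest_graph V E idexp" "shortest_path V E ps"
      and "window_send (path_input V E ps \<zeta> v) (hist window_send E (path_input V E ps \<zeta>) r v) u = Some msg"
    for idexp V E ps \<zeta> r v u msg
    using window_send_less that .
  show "window_out (path_input V E ps \<zeta> (ps ! i)) (hist window_send E (path_input V E ps \<zeta>) (1 * \<zeta>) (ps ! i))
      = Xlege E ps \<zeta> i (Suc i)"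
    if "congest_graph V E idexp" "shortest_path V E ps" "1 \<le> \<zeta>" "i < length ps"
    for idexp V E ps \<zeta> i
    using window_out_correct that by simp
qed

end
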